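(* Let $M$ and $N$ be monoids with finite generating sets $X$ and $Y$ respectively, and let $f:(M,d_X)\to(N,d_Y)$ be a quasi-isometric embedding. If $S\subseteq M$ is infinite, then $f(S)$ is infinite.
   Context: For a monoid $M$ generated by a finite set $X$, $d_X(x,y)=\inf\{|w|:w\in X^*,\ xw=y\}$, where $X^*$ is the free monoid on $X$ and $\inf\emptyset=\infty$. A map $f:(M,d_X)\to(N,d_Y)$ is a quasi-isometric embedding if there are constants $1\le\lambda<\infty$, $0<\epsilon<\infty$ with $\frac1\lambda d_X(x,y)-\epsilon\le d_Y(f(x),f(y))\le\lambda d_X(x,y)+\epsilon$ for all $x,y\in M$ (with $\infty$ absorbing addition and multiplication by positive reals). *)

theory Defs
  imports Main "HOL-Library.Extended_Real"
begin

definition generated_by :: "'a::monoid_mult set \<Rightarrow> bool" where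
  "generated_by X \<longleftrightarrow> (\<forall>m. \<exists>w. set w \<subseteq> X \<and> prod_list w = m)"

text \<open>Directed word distance d_X(x,y) = inf{|w| : w in X^*, x w = y}, with inf of empty set = infinity.\<close>
definition word_dist :: "'a::monoid_mult set \<Rightarrow> 'a \<Rightarrow> 'a \<Rightarrow> enat" where
  "word_dist X x y = (INF w \<in> {w. set w \<subseteq> X \<and> x * prod_list w = y}. enat (length w))"

text \<open>Quasi-isometric embedding; infinity absorbs addition and multiplication by positive reals (ereal arithmetic).\<close>
definition qi_embedding :: "'a::monoid_mult set \<Rightarrow> 'b::monoid_mult set \<Rightarrow> ('a \<Rightarrow> 'b) \<Rightarrow> bool" where
  "qi_embedding X Y f \<longleftrightarrow> (\<exists>lam eps::real. 1 \<le> lam \<and> 0 < eps \<and>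
     (\<forall>x y. ereal (1/lam) * ereal_of_enat (word_dist X x y) - ereal eps
               \<le> ereal_of_enat (word_dist Y (f x) (f y))
           \<and> ereal_of_enat (word_dist Y (f x) (f y))
               \<le> ereal lam * ereal_of_enat (word_dist X x y) + ereal eps))"

end

theory Submission
  imports Defs
begin

text \<open>Points with the same image under a quasi-isometric embedding lie within a uniformly
  bounded distance of each other, and balls of bounded radius are finite because \<open>X\<close> is
  finite. Hence every fibre of \<open>f\<close> is finite, and an infinite set cannot have a finite image.\<close>

lemma word_dist_attained:
  assumes "word_dist X x y = enat k"
  obtains w where "set w \<subseteq> X" "x * prod_list w = y" "length w = k"
proof -
  let ?L = "(\<lambda>w. enat (length w)) ` {w. set w \<subseteq> X \<and> x * prod_list w = y}"
  have "?L \<noteq> {}"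
    using assms unfolding word_dist_def by (auto simp: Inf_enat_def split: if_splits)
  then have "Inf ?L \<in> ?L"
    unfolding Inf_enat_def by (simp only: if_False) (rule LeastI_ex, blast)
  with assms that show ?thesis unfolding word_dist_def by auto
qed

lemma word_dist_self [simp]: "word_dist X x x = 0"
proof -
  have "word_dist X x x \<le> enat (length ([] :: 'a list))"
    unfolding word_dist_def by (rule INF_lower) auto
  then show ?thesis by (simp add: zero_enat_def[symmetric])
qed

lemma finite_word_ball:
  assumes "finite X"
  shows "finite {y. word_dist X x y \<le> enat N}"
proof (rule finite_subset)
  show "{y. word_dist X x y \<le> enat N}
          \<subseteq> (\<lambda>w. x * prod_list w) ` {w. set w \<subseteq> X \<and> length w \<le> N}"
  proof
    fix y assume "y \<in> {y. word_dist X x y \<le> enat N}"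
    then obtain k where "word_dist X x y = enat k" "k \<le> N"
      using enat_ile by fastforce
    then show "y \<in> (\<lambda>w. x * prod_list w) ` {w. set w \<subseteq> X \<and> length w \<le> N}"
      by (metis (mono_tags, lifting) word_dist_attained image_eqI mem_Collect_eq)
  qed
  show "finite ((\<lambda>w. x * prod_list w) ` {w. set w \<subseteq> X \<and> length w \<le> N})"
    using finite_lists_length_le[OF assms] by simp
qed

lemma ereal_scaled_le_imp_finite_bounded:
  fixes lam eps :: real
  assumes "1 \<le> lam"
    and "ereal (1/lam) * ereal_of_enat d - ereal eps \<le> 0"
  shows "d \<le> enat (nat \<lceil>lam * eps\<rceil>)"
proof (cases d)
  case (enat k)
  have "real k / lam \<le> eps" using assms(2) enat by simp
  then have "real k \<le> lam * eps" using assms(1) by (simp add: divide_le_eq mult.commute)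
  then show ?thesis using enat by (simp add: le_nat_iff) linarith
next
  case infinity
  have "ereal (1/lam) > 0" using assms(1) by simp
  then show ?thesis using assms(2) infinity by simp
qed

lemma qi_embedding_fibres_bounded:
  assumes "qi_embedding X Y f"
  obtains N where "\<And>x y. f x = f y \<Longrightarrow> word_dist X x y \<le> enat N"
proof -
  obtain lam eps :: real where "1 \<le> lam" and lower:
    "\<And>x y. ereal (1/lam) * ereal_of_enat (word_dist X x y) - ereal eps
               \<le> ereal_of_enat (word_dist Y (f x) (f y))"
    using assms unfolding qi_embedding_def by blast
  have "word_dist X x y \<le> enat (nat \<lceil>lam * eps\<rceil>)" if "f x = f y" for x y
    using lower[of x y] that \<open>1 \<le> lam\<close>
    by (intro ereal_scaled_le_imp_finite_bounded) simp_all
  then show ?thesis using that by blast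
qed

theorem lemma7p1:
  fixes X :: "'a::monoid_mult set" and Y :: "'b::monoid_mult set"
    and f :: "'a \<Rightarrow> 'b" and S :: "'a set"
  assumes "finite X" and "generated_by X"
    and "finite Y" and "generated_by Y"
    and "qi_embedding X Y f"
    and "infinite S"
  shows "infinite (f ` S)"
proof
  assume "finite (f ` S)"
  obtain N where N: "\<And>x y. f x = f y \<Longrightarrow> word_dist X x y \<le> enat N"
    using qi_embedding_fibres_bounded[OF assms(5)] by blast
  have "S \<inter> f -` {f x} \<subseteq> {y. word_dist X x y \<le> enat N}" for x
    using N by auto
  then have "finite (S \<inter> f -` {f x})" for x
    using finite_word_ball[OF assms(1)] by (rule finite_subset)
  moreover have "S = (\<Union>y\<in>f ` S. S \<inter> f -` {y})" by auto
  ultimately have "finite S"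
    using \<open>finite (f ` S)\<close> by (metis (no_types, lifting) finite_UN_I imageE)
  with assms(6) show False by contradiction
qed

end
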